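(* For every behavior $r$ and every language $K\subseteq\Sigma^*$, $L(\mathcal C(r),K)=L(\mathcal C(r))\,\|\,K$.
   Context: Let $\Sigma$ be a finite alphabet. Behaviors are the terms generated by $r,s ::= \phi \mid \varepsilon \mid x\ (x\in\Sigma) \mid r+s \mid r\cdot s \mid r^* \mid \mathrm{fork}(r)$. For words $v,w\in\Sigma^*$ the shuffle $v\| w\subseteq \Sigma^*$ is defined by $\varepsilon\|w=\{w\}$, $v\|\varepsilon=\{v\}$, $xv\|yw=\{x\}\cdot(v\|yw)\cup\{y\}\cdot(xv\|w)$ for $x,y\in\Sigma$, and it is lifted to languages by $L\|M=\bigcup_{v\in L,w\in M} v\|w$; $L\cdot M$ denotes concatenation of languages. For $K\subseteq\Sigma^*$ the trace language $L(r,K)\subseteq\Sigma^*$ is defined by structural recursion: $L(\phi,K)=\emptyset$, $L(\varepsilon,K)=K$, $L(x,K)=\{x\}\cdot K$, $L(r+s,K)=L(r,K)\cup L(s,K)$, $L(r\cdot s,K)=L(r,L(s,K))$, $L(r^*,K)$ is the least fixpoint (w.r.t. $\subseteq$) of the monotone map $X\mapsto L(r,X)\cup K$, and $L(\mathrm{fork}(r),K)=L(r)\|K$, where $L(r)=L(r,\{\varepsilon\})$. The concurrent part $\mathcal C(r)$ is the behavior defined by: $\mathcal C(\phi)=\phi$, $\mathcal C(\varepsilon)=\varepsilon$, $\mathcal C(x)=\phi$, $\mathcal C(r+s)=\mathcal C(r)+\mathcal C(s)$, $\mathcal C(r\cdot s)=\mathcal C(r)\cdot\mathcal C(s)$, $\mathcal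 C(r^* )=\mathcal C(r)^*$, $\mathcal C(\mathrm{fork}(r))=\mathrm{fork}(r)$. *)

theory Defs
  imports Main
begin

datatype 'a beh =
    Zero
  | One
  | Atom 'a
  | Plus "'a beh" "'a beh"
  | Times "'a beh" "'a beh"
  | Star "'a beh"
  | Fork "'a beh"

fun shuffle :: "'a list \<Rightarrow> 'a list \<Rightarrow> 'a list set" where
  "shuffle [] w = {w}"
| "shuffle v [] = {v}"
| "shuffle (x # v) (y # w) =
     ((\<lambda>u. x # u) ` shuffle v (y # w)) \<union> ((\<lambda>u. y # u) ` shuffle (x # v) w)"

definition shuffle_lang :: "'a list set \<Rightarrow> 'a list set \<Rightarrow> 'a list set" where
  "shuffle_lang L M = (\<Union>v\<in>L. \<Union>w\<in>M. shuffle v w)"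

definition conc :: "'a list set \<Rightarrow> 'a list set \<Rightarrow> 'a list set" where
  "conc L M = {v @ w | v w. v \<in> L \<and> w \<in> M}"

fun trace :: "'a beh \<Rightarrow> 'a list set \<Rightarrow> 'a list set" where
  "trace Zero K = {}"
| "trace One K = K"
| "trace (Atom x) K = conc {[x]} K"
| "trace (Plus r s) K = trace r K \<union> trace s K"
| "trace (Times r s) K = trace r (trace s K)"
| "trace (Star r) K = lfp (\<lambda>X. trace r X \<union> K)"
| "trace (Fork r) K = shuffle_lang (trace r {[]}) K"

abbreviation lang :: "'a beh \<Rightarrow> 'a list set" where
  "lang r \<equiv> trace r {[]}"

fun conc_part :: "'a beh \<Rightarrow> 'a beh" where
  "conc_part Zero = Zero"
| "conc_part One = One"
| "conc_part (Atom x) = Zero"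
| "conc_part (Plus r s) = Plus (conc_part r) (conc_part s)"
| "conc_part (Times r s) = Times (conc_part r) (conc_part s)"
| "conc_part (Star r) = Star (conc_part r)"
| "conc_part (Fork r) = Fork r"

end

theory Submission
  imports Defs
begin

text \<open>A concurrent part \<open>\<C>(r)\<close> is built from \<open>\<phi>\<close>, \<open>\<epsilon>\<close> and forks by
  choice, sequencing and iteration, so it suffices that \<open>X \<mapsto> L \<parallel> X\<close> turns each of these
  constructs into the corresponding operation on the left factor. For choice this is
  distributivity, for sequencing associativity of the shuffle, and for iteration the least
  fixpoint of \<open>X \<mapsto> L \<parallel> X \<union> K\<close> is \<open>M \<parallel> K\<close> where \<open>M\<close> is the least fixpoint for \<open>K = {\<epsilon>}\<close>.\<close>

lemma shuffle_eq_shuffles: "shuffle v w = shuffles v w"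
  by (induction v w rule: shuffle.induct) auto

lemma shuffles_assoc_left_to_right:
  assumes "x \<in> shuffles u c" and "u \<in> shuffles a b"
  shows "\<exists>v. v \<in> shuffles b c \<and> x \<in> shuffles a v"
  using assms
proof (induction x arbitrary: a b c u)
  case Nil
  then show ?case by auto
next
  case (Cons z zs)
  from Cons.prems(1) consider
      (left) u' where "u = z # u'" "zs \<in> shuffles u' c"
    | (right) c' where "c = z # c'" "zs \<in> shuffles u c'"
    by (cases u; cases c) (auto simp: Cons_in_shuffles_iff)
  then show ?case
  proof cases
    case left
    from Cons.prems(2) consider
        (fst) a' where "a = z # a'" "u' \<in> shuffles a' b"
      | (snd) b' where "b = z # b'" "u' \<in> shuffles a b'"
      unfolding left(1) by (cases a; cases b) (auto simp: Cons_in_shuffles_iff)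
    then show ?thesis
    proof cases
      case fst
      with Cons.IH left(2) obtain v where "v \<in> shuffles b c" "zs \<in> shuffles a' v" by blast
      with fst(1) show ?thesis by (auto intro: Cons_in_shuffles_leftI)
    next
      case snd
      with Cons.IH left(2) obtain v where "v \<in> shuffles b' c" "zs \<in> shuffles a v" by blast
      with snd(1) show ?thesis by (auto intro: Cons_in_shuffles_leftI Cons_in_shuffles_rightI)
    qed
  next
    case right
    with Cons.IH Cons.prems(2) obtain v where "v \<in> shuffles b c'" "zs \<in> shuffles a v" by blast
    with right(1) show ?thesis by (auto intro: Cons_in_shuffles_rightI)
  qed
qed

lemma shuffles_assoc_right_to_left:
  assumes "x \<in> shuffles a v" and "v \<in> shuffles b c"
  shows "\<exists>u. u \<in> shuffles a b \<and> x \<in> shuffles u c"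
  using shuffles_assoc_left_to_right[of x v a c b] assms by (auto simp: shuffles_commutes)

lemma shuffle_lang_assoc:
  "shuffle_lang A (shuffle_lang B C) = shuffle_lang (shuffle_lang A B) C"
proof (intro equalityI subsetI)
  fix x assume "x \<in> shuffle_lang A (shuffle_lang B C)"
  then obtain a b c v where abc: "a \<in> A" "b \<in> B" "c \<in> C"
      and "v \<in> shuffles b c" "x \<in> shuffles a v"
    unfolding shuffle_lang_def shuffle_eq_shuffles by blast
  then obtain u where "u \<in> shuffles a b" "x \<in> shuffles u c"
    using shuffles_assoc_right_to_left by blast
  with abc show "x \<in> shuffle_lang (shuffle_lang A B) C"
    unfolding shuffle_lang_def shuffle_eq_shuffles by blast
next
  fix x assume "x \<in> shuffle_lang (shuffle_lang A B) C"
  then obtain a b c u where abc: "a \<in> A" "b \<in> B" "c \<in> C"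
      and "u \<in> shuffles a b" "x \<in> shuffles u c"
    unfolding shuffle_lang_def shuffle_eq_shuffles by blast
  then obtain v where "v \<in> shuffles b c" "x \<in> shuffles a v"
    using shuffles_assoc_left_to_right by blast
  with abc show "x \<in> shuffle_lang A (shuffle_lang B C)"
    unfolding shuffle_lang_def shuffle_eq_shuffles by blast
qed

lemma shuffle_lang_Nil_left [simp]: "shuffle_lang {[]} K = K"
  unfolding shuffle_lang_def shuffle_eq_shuffles by auto

lemma shuffle_lang_Nil_right [simp]: "shuffle_lang L {[]} = L"
  unfolding shuffle_lang_def shuffle_eq_shuffles by auto

lemma shuffle_lang_empty_left [simp]: "shuffle_lang {} K = {}"
  unfolding shuffle_lang_def by auto

lemma shuffle_lang_Un_left: "shuffle_lang (A \<union> B) K = shuffle_lang A K \<union> shuffle_lang B K"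
  unfolding shuffle_lang_def by auto

lemma shuffle_lang_mono: "A \<subseteq> A' \<Longrightarrow> B \<subseteq> B' \<Longrightarrow> shuffle_lang A B \<subseteq> shuffle_lang A' B'"
  unfolding shuffle_lang_def by blast

lemma mono_shuffle_lang_Un: "mono (\<lambda>X. shuffle_lang A X \<union> K)"
  by (rule monoI) (use shuffle_lang_mono in blast)

lemma lfp_shuffle_lang_Un:
  "lfp (\<lambda>X. shuffle_lang A X \<union> K) = shuffle_lang (lfp (\<lambda>X. shuffle_lang A X \<union> {[]})) K"
  (is "?P = shuffle_lang ?M K")
proof
  have M: "?M = shuffle_lang A ?M \<union> {[]}"
    by (rule lfp_unfold[OF mono_shuffle_lang_Un])
  have "shuffle_lang A (shuffle_lang ?M K) \<union> K = shuffle_lang (shuffle_lang A ?M \<union> {[]}) K"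
    by (simp only: shuffle_lang_assoc shuffle_lang_Un_left shuffle_lang_Nil_left)
  also have "\<dots> = shuffle_lang ?M K"
    by (simp only: M[symmetric])
  finally show "?P \<subseteq> shuffle_lang ?M K"
    by (intro lfp_lowerbound) simp
next
  have P: "?P = shuffle_lang A ?P \<union> K"
    by (rule lfp_unfold[OF mono_shuffle_lang_Un])
  \<comment> \<open>Induction over \<open>?M\<close> with the invariant that shuffling a word into \<open>K\<close> stays inside \<open>?P\<close>.\<close>
  let ?Q = "{v. shuffle_lang {v} K \<subseteq> ?P}"
  have "shuffle_lang {u} K \<subseteq> ?P" if "u \<in> shuffle_lang A ?Q" for u
  proof -
    from that obtain a q where "a \<in> A" "q \<in> ?Q" "u \<in> shuffle a q"
      unfolding shuffle_lang_def by blast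
    then have "shuffle_lang {u} K \<subseteq> shuffle_lang (shuffle_lang {a} {q}) K"
      by (intro shuffle_lang_mono) (auto simp: shuffle_lang_def)
    also have "\<dots> = shuffle_lang {a} (shuffle_lang {q} K)"
      by (simp add: shuffle_lang_assoc)
    also have "\<dots> \<subseteq> shuffle_lang A ?P"
      using \<open>a \<in> A\<close> \<open>q \<in> ?Q\<close> by (intro shuffle_lang_mono) auto
    also have "\<dots> \<subseteq> ?P"
      using P by blast
    finally show ?thesis .
  qed
  moreover have "[] \<in> ?Q"
    using P by auto
  ultimately have "?M \<subseteq> ?Q"
    by (intro lfp_lowerbound) blast
  then show "shuffle_lang ?M K \<subseteq> ?P"
    unfolding shuffle_lang_def by blast
qed

theorem lemma14:
  fixes r :: "'a::finite beh" and K :: "'a list set"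
  shows "trace (conc_part r) K = shuffle_lang (lang (conc_part r)) K"
proof (induction r arbitrary: K)
  \<comment> \<open>The hypotheses are instantiated by hand: as rewrite rules they loop, since \<open>lang\<close> on the
     right-hand side is the instance \<open>K = {[]}\<close> of the left-hand side.\<close>
  case (Plus r s)
  show ?case
    by (simp only: conc_part.simps trace.simps Plus.IH[of K] shuffle_lang_Un_left)
next
  case (Times r s)
  have "trace (conc_part (Times r s)) K
      = shuffle_lang (lang (conc_part r)) (shuffle_lang (lang (conc_part s)) K)"
    by (simp only: conc_part.simps trace.simps Times.IH(2)[of K]
        Times.IH(1)[of "shuffle_lang (lang (conc_part s)) K"])
  also have "\<dots> = shuffle_lang (shuffle_lang (lang (conc_part r)) (lang (conc_part s))) K"
    by (rule shuffle_lang_assoc)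
  also have "shuffle_lang (lang (conc_part r)) (lang (conc_part s)) = lang (conc_part (Times r s))"
    by (simp only: conc_part.simps trace.simps Times.IH(1)[of "lang (conc_part s)"])
  finally show ?case .
next
  case (Star r)
  have body: "(\<lambda>X. trace (conc_part r) X \<union> K') = (\<lambda>X. shuffle_lang (lang (conc_part r)) X \<union> K')"
    for K' :: "'a list set"
    by (rule ext) (subst Star.IH, rule refl)
  have "trace (conc_part (Star r)) K = lfp (\<lambda>X. shuffle_lang (lang (conc_part r)) X \<union> K)"
    by (simp only: conc_part.simps trace.simps body)
  also have "\<dots> = shuffle_lang (lfp (\<lambda>X. shuffle_lang (lang (conc_part r)) X \<union> {[]})) K"
    by (rule lfp_shuffle_lang_Un)
  also have "lfp (\<lambda>X. shuffle_lang (lang (conc_part r)) X \<union> {[]}) = lang (conc_part (Star r))"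
    by (simp only: conc_part.simps trace.simps body)
  finally show ?case .
qed simp_all

end
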